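(* Let $G$ be a finite group with $d(G)\geq 2$, and assume that $G$ is $2$-flexible. Then $G/\mathrm{Cyc}(G)$ is $1$-flexible.
   Context: For a finite group $H$, $d(H)$ denotes the minimal size of a generating set of $H$. For an integer $1 \leq k \leq d(H)$, a finite group $H$ is called $k$-flexible if for any $x_1,\dots,x_k \in H$ with $d(\langle x_1,\dots,x_k\rangle)=k$ there exist $x_{k+1},\dots,x_{d(H)} \in H$ such that $\langle x_1,\dots,x_{d(H)}\rangle = H$. The cycliciser of $G$ is $\mathrm{Cyc}(G) = \{c \in G \mid \langle c,g\rangle \text{ is cyclic for all } g \in G\}$; it is a normal subgroup of $G$. *)

theory Defs
  imports "HOL-Algebra.Elementary_Groups" "HOL-Algebra.Coset"
begin

definition gen_rank :: "('a, 'b) monoid_scheme \<Rightarrow> nat" where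
  "gen_rank H = (LEAST n. \<exists>S. S \<subseteq> carrier H \<and> finite S \<and> card S = n \<and>
                              generate H S = carrier H)"

definition flexible :: "('a, 'b) monoid_scheme \<Rightarrow> nat \<Rightarrow> bool" where
  "flexible H k \<longleftrightarrow> 1 \<le> k \<and> k \<le> gen_rank H \<and>
     (\<forall>x :: nat \<Rightarrow> 'a. (\<forall>i<k. x i \<in> carrier H) \<longrightarrow>
        gen_rank (subgroup_generated H (x ` {..<k})) = k \<longrightarrow>
        (\<exists>y :: nat \<Rightarrow> 'a. (\<forall>i<k. y i = x i) \<and> (\<forall>i<gen_rank H. y i \<in> carrier H) \<and>
             generate H (y ` {..<gen_rank H}) = carrier H))"

definition Cyc :: "('a, 'b) monoid_scheme \<Rightarrow> 'a set" where
  "Cyc G = {c \<in> carrier G. \<forall>g \<in> carrier G. cyclic_group (subgroup_generated G {c, g})}"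

end

theory Submission
  imports Defs
begin

(* Every element of Cyc G commutes with all of G, and Cyc G is a normal subgroup; in a finite
  group it is cyclic, say Cyc G = <z>.  If the cosets of a set T generate G / Cyc G, then
  T together with z generates G, and replacing some t in T by a generator of the cyclic group
  <z, t> shows d(G) <= |T|.  Hence d(G / Cyc G) = d(G) once d(G) >= 2.  A non-trivial coset
  x Cyc G has x outside Cyc G, so some g makes <x, g> non-cyclic, i.e. d(<x, g>) = 2.
  By 2-flexibility (x, g) extends to a generating d(G)-tuple of G, and its image is a
  generating tuple of G / Cyc G of the right length starting with x Cyc G. *)

lemma gen_rank_le_card:
  assumes "finite S" "S \<subseteq> carrier H" "generate H S = carrier H"
  shows "gen_rank H \<le> card S"
  unfolding gen_rank_def by (rule Least_le) (use assms in blast)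

lemma (in group) gen_rank_witness:
  assumes "finite (carrier G)"
  obtains S where "S \<subseteq> carrier G" "finite S" "card S = gen_rank G" "generate G S = carrier G"
proof -
  have "generate G (carrier G) = carrier G"
    using generate_incl[of "carrier G"] generate.incl[of _ "carrier G" G] by blast
  then have "\<exists>n S. S \<subseteq> carrier G \<and> finite S \<and> card S = n \<and> generate G S = carrier G"
    using assms by blast
  from LeastI_ex[OF this] show ?thesis
    using that unfolding gen_rank_def by blast
qed

lemma (in group) gen_rank_trivial:
  assumes "carrier G = {\<one>}"
  shows "gen_rank G = 0"
  using gen_rank_le_card[of "{}" G] generate_empty assms by simp

lemma (in group) cyclic_group_if_gen_rank_le_1:
  assumes "finite (carrier G)" "gen_rank G \<le> 1"
  shows "cyclic_group G"
proof -
  obtain S where S: "S \<subseteq> carrier G" "finite S" "card S = gen_rank G" "generate G S = carrier G"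
    using gen_rank_witness[OF assms(1)] .
  obtain s where "S \<subseteq> {s}"
    using S(2,3) assms(2) by (metis card_le_Suc0_iff_eq empty_subsetI insert_subset One_nat_def subset_eq)
  with S(1) have "carrier G \<subseteq> generate G (carrier G \<inter> {s})"
    using S(4) mono_generate[of S "carrier G \<inter> {s}"] by auto
  then have "generate G (carrier G \<inter> {s}) = carrier G"
    using generate_incl[of "carrier G \<inter> {s}"] by auto
  then have "subgroup_generated G {s} = G"
    by (simp add: subgroup_generated_def)
  then show ?thesis
    using cyclic_group_alt by blast
qed

context group
begin

lemma generate_subset_generate:
  assumes "S \<subseteq> carrier G" "T \<subseteq> generate G S"
  shows "generate G T \<subseteq> generate G S"
  using generate_subgroup_incl[OF assms(2) generate_is_subgroup[OF assms(1)]] .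

lemma subgroup_of_cyclic_eq_generate_least_pow:
  assumes w: "w \<in> carrier G" and H: "subgroup H G" "H \<subseteq> generate G {w}"
    and k: "0 < k" "w [^] (k::nat) \<in> H" and k_min: "\<And>j::nat. 0 < j \<Longrightarrow> j < k \<Longrightarrow> w [^] j \<notin> H"
  shows "H = generate G {w [^] k}"
proof
  show "H \<subseteq> generate G {w [^] k}"
  proof
    fix h assume h: "h \<in> H"
    then obtain i :: int where hi: "h = w [^] i"
      using H(2) generate_pow[OF w] by blast
    define q where "q = i div int k"
    define r where "r = i mod int k"
    have i_eq: "i = int k * q + r" and r: "0 \<le> r" "r < int k"
      using k(1) unfolding q_def r_def by auto
    have pow_kq: "(w [^] k) [^] q = w [^] (int k * q)"
      using w by (metis int_pow_int int_pow_pow)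
    have "h = (w [^] k) [^] q \<otimes> w [^] r"
      using w by (simp add: hi i_eq pow_kq int_pow_mult)
    then have "w [^] r = inv ((w [^] k) [^] q) \<otimes> h"
      using w h H(1) by (simp add: inv_solve_left subgroup.mem_carrier)
    also have "\<dots> \<in> H"
      using h k(2) H(1) by (simp add: subgroup.m_closed subgroup.m_inv_closed subgroup_int_pow_closed)
    finally have "w [^] nat r \<in> H"
      using r(1) int_pow_int[of G w "nat r"] by simp
    then have "r = 0"
      using k_min[of "nat r"] r by linarith
    then have "h = (w [^] k) [^] q"
      by (simp add: hi i_eq pow_kq)
    then show "h \<in> generate G {w [^] k}"
      using generate_pow[of "w [^] k"] w by auto
  qed
  show "generate G {w [^] k} \<subseteq> H"
    using generate_subgroup_incl[OF _ H(1)] k(2) by auto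
qed

lemma subgroup_of_cyclic_pos_pow_mem:
  assumes w: "w \<in> carrier G" and H: "subgroup H G" "H \<subseteq> generate G {w}" "H \<noteq> {\<one>}"
  shows "\<exists>k::nat. 0 < k \<and> w [^] k \<in> H"
proof -
  obtain h where h: "h \<in> H" "h \<noteq> \<one>"
    using H(3) subgroup.one_closed[OF H(1)] by blast
  moreover obtain i :: int where "h = w [^] i"
    using h(1) H(2) generate_pow[OF w] by blast
  ultimately have i: "w [^] i \<in> H" "w [^] i \<noteq> \<one>"
    by simp_all
  have "w [^] nat \<bar>i\<bar> \<in> H"
  proof (cases "i < 0")
    case True
    then have "w [^] nat \<bar>i\<bar> = inv (w [^] i)"
      using w int_pow_int[of G w "nat \<bar>i\<bar>"] int_pow_neg[of w i] by simp
    then show ?thesis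
      using i(1) subgroup.m_inv_closed[OF H(1)] by simp
  next
    case False
    then show ?thesis
      using i(1) int_pow_int[of G w "nat \<bar>i\<bar>"] by simp
  qed
  moreover have "0 < nat \<bar>i\<bar>"
    using i(2) by (cases "i = 0") auto
  ultimately show ?thesis
    by blast
qed

lemma subgroup_of_cyclic_is_cyclic:
  assumes w: "w \<in> carrier G" and H: "subgroup H G" "H \<subseteq> generate G {w}"
  shows "\<exists>v \<in> carrier G. H = generate G {v}"
proof (cases "H = {\<one>}")
  case True
  then show ?thesis
    using generate_one by blast
next
  case False
  define k where "k = (LEAST k::nat. 0 < k \<and> w [^] k \<in> H)"
  have "0 < k" "w [^] k \<in> H"
    using LeastI_ex[OF subgroup_of_cyclic_pos_pow_mem[OF w H False]] unfolding k_def by auto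
  moreover have "w [^] j \<notin> H" if "0 < j" "j < k" for j
    using not_less_Least[of j "\<lambda>k::nat. 0 < k \<and> w [^] k \<in> H"] that unfolding k_def by blast
  ultimately have "H = generate G {w [^] k}"
    using subgroup_of_cyclic_eq_generate_least_pow[OF w H] by blast
  then show ?thesis
    using w by blast
qed

lemma cyclic_group_subgroup_generated_iff:
  assumes "S \<subseteq> carrier G"
  shows "cyclic_group (subgroup_generated G S) \<longleftrightarrow> (\<exists>v \<in> carrier G. generate G S = generate G {v})"
proof -
  let ?K = "subgroup_generated G S"
  have K: "carrier ?K = generate G S"
    using assms by (simp add: carrier_subgroup_generated Int_absorb1)
  have powers: "range (\<lambda>n::int. v [^]\<^bsub>?K\<^esub> n) = generate G {v}" if "v \<in> carrier ?K" for v
  proof -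
    have "range (\<lambda>n::int. v [^]\<^bsub>?K\<^esub> n) = range (\<lambda>n::int. v [^] n)"
      using that by (simp add: int_pow_subgroup_generated)
    also have "\<dots> = generate G {v}"
      using that carrier_subgroup_generated_subset generate_pow[of v] by blast
    finally show ?thesis .
  qed
  show ?thesis
  proof
    assume "cyclic_group ?K"
    then obtain v where v: "v \<in> carrier ?K" "carrier ?K = range (\<lambda>n::int. v [^]\<^bsub>?K\<^esub> n)"
      using group.cyclic_group[OF group_subgroup_generated] by blast
    then have "generate G S = generate G {v}"
      using K powers[OF v(1)] by simp
    moreover have "v \<in> carrier G"
      using v(1) carrier_subgroup_generated_subset by blast
    ultimately show "\<exists>v \<in> carrier G. generate G S = generate G {v}"
      by blast
  next
    assume "\<exists>v \<in> carrier G. generate G S = generate G {v}"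
    then obtain v where "v \<in> carrier G" "generate G S = generate G {v}"
      by blast
    moreover have "v \<in> generate G {v}"
      by (rule generate.incl) simp
    ultimately show "cyclic_group ?K"
      using group.cyclic_group[OF group_subgroup_generated] K powers by metis
  qed
qed

lemma Cyc_subset_carrier: "Cyc G \<subseteq> carrier G"
  by (auto simp: Cyc_def)

lemma mem_Cyc_iff:
  "c \<in> Cyc G \<longleftrightarrow>
     c \<in> carrier G \<and> (\<forall>g \<in> carrier G. \<exists>v \<in> carrier G. generate G {c, g} = generate G {v})"
proof -
  have "cyclic_group (subgroup_generated G {c, g}) \<longleftrightarrow>
      (\<exists>v \<in> carrier G. generate G {c, g} = generate G {v})"
    if "c \<in> carrier G" "g \<in> carrier G" for g
    using that by (intro cyclic_group_subgroup_generated_iff) simp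
  then show ?thesis
    unfolding Cyc_def by blast
qed

lemma Cyc_memI:
  assumes "c \<in> carrier G" and "\<And>g. g \<in> carrier G \<Longrightarrow> \<exists>w \<in> carrier G. {c, g} \<subseteq> generate G {w}"
  shows "c \<in> Cyc G"
  unfolding mem_Cyc_iff
proof (intro conjI ballI)
  fix g assume g: "g \<in> carrier G"
  then obtain w where w: "w \<in> carrier G" "{c, g} \<subseteq> generate G {w}"
    using assms(2) by blast
  then have "generate G {c, g} \<subseteq> generate G {w}"
    using generate_subset_generate[of "{w}" "{c, g}"] by blast
  moreover have "subgroup (generate G {c, g}) G"
    using assms(1) g by (intro generate_is_subgroup) simp
  ultimately show "\<exists>v \<in> carrier G. generate G {c, g} = generate G {v}"
    using subgroup_of_cyclic_is_cyclic[OF w(1)] by blast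
qed (rule assms(1))

lemma Cyc_pairE:
  assumes "c \<in> Cyc G" "g \<in> carrier G"
  obtains v where "v \<in> carrier G" "{c, g} \<subseteq> generate G {v}"
  using assms generate.incl[of _ "{c, g}" G] unfolding mem_Cyc_iff by blast

lemma Cyc_commute:
  assumes c: "c \<in> Cyc G" and g: "g \<in> carrier G"
  shows "c \<otimes> g = g \<otimes> c"
proof -
  obtain v where v: "v \<in> carrier G" "{c, g} \<subseteq> generate G {v}"
    using Cyc_pairE[OF c g] .
  then obtain i j :: int where "c = v [^] i" "g = v [^] j"
    using generate_pow[OF v(1)] by auto
  then show ?thesis
    using v(1) by (simp add: int_pow_mult[symmetric] add.commute)
qed

lemma Cyc_subgroup: "subgroup (Cyc G) G"
proof (rule subgroupI)
  show "Cyc G \<subseteq> carrier G"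
    by (rule Cyc_subset_carrier)
  have "\<one> \<in> Cyc G"
  proof (rule Cyc_memI)
    fix g assume "g \<in> carrier G"
    moreover have "{\<one>, g} \<subseteq> generate G {g}"
      using generate.one generate.incl[of g "{g}"] by blast
    ultimately show "\<exists>w \<in> carrier G. {\<one>, g} \<subseteq> generate G {w}"
      by blast
  qed (rule one_closed)
  then show "Cyc G \<noteq> {}"
    by blast
next
  fix c assume c: "c \<in> Cyc G"
  show "inv c \<in> Cyc G"
  proof (rule Cyc_memI)
    show "inv c \<in> carrier G"
      using c Cyc_subset_carrier by auto
  next
    fix g assume "g \<in> carrier G"
    then obtain v where v: "v \<in> carrier G" "{c, g} \<subseteq> generate G {v}"
      using Cyc_pairE[OF c] by blast
    then have "inv c \<in> generate G {v}"
      using generate_m_inv_closed[of "{v}" c] by blast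
    then show "\<exists>w \<in> carrier G. {inv c, g} \<subseteq> generate G {w}"
      using v by blast
  qed
next
  fix c d assume c: "c \<in> Cyc G" and d: "d \<in> Cyc G"
  show "c \<otimes> d \<in> Cyc G"
  proof (rule Cyc_memI)
    show "c \<otimes> d \<in> carrier G"
      using c d Cyc_subset_carrier by auto
  next
    fix g assume "g \<in> carrier G"
    then obtain u where u: "u \<in> carrier G" "{c, g} \<subseteq> generate G {u}"
      using Cyc_pairE[OF c] by blast
    obtain w where w: "w \<in> carrier G" "{d, u} \<subseteq> generate G {w}"
      using Cyc_pairE[OF d u(1)] by blast
    then have "generate G {u} \<subseteq> generate G {w}"
      using generate_subset_generate[of "{w}" "{u}"] by blast
    then have "c \<in> generate G {w}" "d \<in> generate G {w}" "g \<in> generate G {w}"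
      using u(2) w(2) by blast+
    then have "{c \<otimes> d, g} \<subseteq> generate G {w}"
      using generate.eng[of c G "{w}" d] by blast
    then show "\<exists>w \<in> carrier G. {c \<otimes> d, g} \<subseteq> generate G {w}"
      using w(1) by blast
  qed
qed

lemma Cyc_normal: "Cyc G \<lhd> G"
  unfolding normal_inv_iff
proof (intro conjI ballI Cyc_subgroup)
  fix x c assume x: "x \<in> carrier G" and c: "c \<in> Cyc G"
  moreover have "c \<in> carrier G"
    using c Cyc_subset_carrier by blast
  ultimately have "x \<otimes> c \<otimes> inv x = c"
    by (simp add: Cyc_commute[OF c x, symmetric] m_assoc)
  then show "x \<otimes> c \<otimes> inv x \<in> Cyc G"
    using c by simp
qed

lemma Cyc_cyclic:
  assumes fin: "finite (carrier G)"
  obtains z where "z \<in> carrier G" "Cyc G = generate G {z}"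
proof -
  let ?ord = "\<lambda>y. card (generate G {y})"
  have fin_ord: "finite (?ord ` Cyc G)"
    using fin finite_subset[OF Cyc_subset_carrier] by blast
  moreover have "?ord ` Cyc G \<noteq> {}"
    using subgroup.one_closed[OF Cyc_subgroup] by blast
  ultimately have "Max (?ord ` Cyc G) \<in> ?ord ` Cyc G"
    by (rule Max_in)
  then obtain z where z: "z \<in> Cyc G" "Max (?ord ` Cyc G) = ?ord z"
    by blast
  have z_max: "?ord y \<le> ?ord z" if "y \<in> Cyc G" for y
    using that fin_ord z(2) Max_ge[of "?ord ` Cyc G" "?ord y"] by simp
  have zG: "z \<in> carrier G"
    using z(1) Cyc_subset_carrier by blast
  \<comment> \<open>For c in Cyc G the cyclic group <z, c> = <v> lies in Cyc G and contains <z>,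
    so the maximality of |<z>| forces <v> = <z>.\<close>
  have "Cyc G \<subseteq> generate G {z}"
  proof
    fix c assume c: "c \<in> Cyc G"
    then obtain v where v: "v \<in> carrier G" "generate G {z, c} = generate G {v}"
      using z(1) Cyc_subset_carrier unfolding mem_Cyc_iff by blast
    have "v \<in> Cyc G"
      using v generate.incl[of v "{v}" G] generate_subgroup_incl[OF _ Cyc_subgroup, of "{z, c}"]
        z(1) c by auto
    moreover have sub: "generate G {z} \<subseteq> generate G {v}"
      using v generate.incl[of z "{z, c}" G] generate_subset_generate[of "{v}" "{z}"] by auto
    moreover have "finite (generate G {v})"
      using fin generate_incl[of "{v}"] v(1) finite_subset by blast
    ultimately have "generate G {z} = generate G {v}"
      using z_max card_subset_eq by (metis card_mono le_antisym)
    then show "c \<in> generate G {z}"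
      using v(2) generate.incl[of c "{z, c}" G] by blast
  qed
  moreover have "generate G {z} \<subseteq> Cyc G"
    using generate_subgroup_incl[OF _ Cyc_subgroup] z(1) by blast
  ultimately show ?thesis
    using that zG by blast
qed

lemma gen_rank_le_card_if_generate_Un_Cyc:
  assumes fin: "finite (carrier G)"
    and T: "finite T" "T \<subseteq> carrier G" "T \<noteq> {}" "generate G (T \<union> Cyc G) = carrier G"
  shows "gen_rank G \<le> card T"
proof -
  obtain z where z: "z \<in> carrier G" "Cyc G = generate G {z}"
    using Cyc_cyclic[OF fin] .
  obtain t where t: "t \<in> T"
    using T(3) by blast
  then have "z \<in> Cyc G" "t \<in> carrier G"
    using z T(2) generate.incl[of z "{z}" G] by auto
  then obtain w where w: "w \<in> carrier G" "generate G {z, t} = generate G {w}"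
    unfolding mem_Cyc_iff by blast
  define T' where "T' = insert w (T - {t})"
  have T': "T' \<subseteq> carrier G"
    unfolding T'_def using w(1) T(2) by blast
  have "{z, t} \<subseteq> generate G {w}"
    using w(2) generate.incl[of z "{z, t}" G] generate.incl[of t "{z, t}" G] by blast
  also have "\<dots> \<subseteq> generate G T'"
    unfolding T'_def by (rule mono_generate) blast
  finally have "Cyc G \<subseteq> generate G T'" "t \<in> generate G T'"
    using z(2) generate_subset_generate[OF T', of "{z}"] by auto
  moreover have "T' \<subseteq> generate G T'"
    by (rule subsetI) (rule generate.incl)
  ultimately have "T \<union> Cyc G \<subseteq> generate G T'"
    unfolding T'_def by blast
  then have "generate G T' = carrier G"
    using T(4) generate_subset_generate[OF T'] generate_incl[OF T'] by blast
  then have "gen_rank G \<le> card T'"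
    using gen_rank_le_card[of T' G] T' T(1) unfolding T'_def by simp
  also have "card T' \<le> card T"
    unfolding T'_def using T(1) t card_Suc_Diff1[of T t] by (simp add: card_insert_if)
  finally show ?thesis .
qed

end

lemma (in group_hom) gen_rank_le_if_surj:
  assumes "finite (carrier G)" "h ` carrier G = carrier H"
  shows "gen_rank H \<le> gen_rank G"
proof -
  obtain S where S: "S \<subseteq> carrier G" "finite S" "card S = gen_rank G" "generate G S = carrier G"
    using G.gen_rank_witness[OF assms(1)] .
  have "generate H (h ` S) = carrier H"
    using generate_img[OF S(1)] S(4) assms(2) by simp
  then have "gen_rank H \<le> card (h ` S)"
    using gen_rank_le_card[of "h ` S" H] S(1,2) hom_closed by blast
  also have "\<dots> \<le> gen_rank G"
    using S(2,3) card_image_le by metis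
  finally show ?thesis .
qed

lemma (in normal) group_hom_Mod: "group_hom G (G Mod H) (\<lambda>a. H #> a)"
  by (simp add: group_hom_def group_hom_axioms_def factorgroup_is_group r_coset_hom_Mod)

context group
begin

lemma generate_Un_normal_eq_carrier:
  assumes N: "N \<lhd> G" and T: "T \<subseteq> carrier G"
    and gen: "generate (G Mod N) ((\<lambda>a. N #> a) ` T) = carrier (G Mod N)"
  shows "generate G (T \<union> N) = carrier G"
proof
  show "generate G (T \<union> N) \<subseteq> carrier G"
    using T normal.axioms(1)[OF N] subgroup.subset by (metis generate_incl le_sup_iff)
next
  show "carrier G \<subseteq> generate G (T \<union> N)"
  proof
    fix g assume g: "g \<in> carrier G"
    have "N #> g \<in> (\<lambda>a. N #> a) ` generate G T"
      using gen g group_hom.generate_img[OF normal.group_hom_Mod[OF N] T]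
      by (simp add: carrier_FactGroup)
    then obtain x where x: "x \<in> generate G T" "N #> g = N #> x"
      by blast
    have "g \<in> N #> x"
      using repr_independenceD[OF normal.axioms(1)[OF N] g] x(2) by simp
    then obtain n where n: "n \<in> N" "g = n \<otimes> x"
      unfolding r_coset_def by blast
    have "n \<in> generate G (T \<union> N)" "x \<in> generate G (T \<union> N)"
      using n(1) x(1) generate.incl[of n "T \<union> N" G] mono_generate[of T "T \<union> N"] by auto
    then show "g \<in> generate G (T \<union> N)"
      using n(2) generate.eng by metis
  qed
qed

lemma gen_rank_Mod_Cyc:
  assumes fin: "finite (carrier G)" and rank: "2 \<le> gen_rank G"
  shows "gen_rank (G Mod Cyc G) = gen_rank G"
proof (rule antisym)
  let ?r = "\<lambda>a. Cyc G #> a"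
  interpret Q: group "G Mod Cyc G"
    by (rule normal.factorgroup_is_group[OF Cyc_normal])
  have carrier_Q: "carrier (G Mod Cyc G) = ?r ` carrier G"
    by (rule carrier_FactGroup)
  show "gen_rank (G Mod Cyc G) \<le> gen_rank G"
    by (rule group_hom.gen_rank_le_if_surj[OF normal.group_hom_Mod[OF Cyc_normal] fin])
      (simp add: carrier_Q)
  obtain S where S: "S \<subseteq> carrier (G Mod Cyc G)" "finite S" "card S = gen_rank (G Mod Cyc G)"
    "generate (G Mod Cyc G) S = carrier (G Mod Cyc G)"
    using Q.gen_rank_witness fin carrier_Q by (metis finite_imageI)
  obtain T where T: "T \<subseteq> carrier G" "inj_on ?r T" "S = ?r ` T"
    using S(1) carrier_Q subset_image_inj by metis
  have fin_T: "finite T" and card_T: "card T = card S"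
    using S(2) T(2,3) by (auto simp: finite_image_iff card_image)
  have gen_T: "generate G (T \<union> Cyc G) = carrier G"
    using generate_Un_normal_eq_carrier[OF Cyc_normal T(1)] S(4) T(3) by simp
  show "gen_rank G \<le> gen_rank (G Mod Cyc G)"
  proof (cases "T = {}")
    case True
    obtain z where z: "z \<in> carrier G" "Cyc G = generate G {z}"
      using Cyc_cyclic[OF fin] .
    then have "generate G ({z} \<union> Cyc G) = carrier G"
      using gen_T True generate.incl[of z "{z}" G] by (simp add: insert_absorb)
    then have "gen_rank G \<le> 1"
      using gen_rank_le_card_if_generate_Un_Cyc[OF fin, of "{z}"] z(1) by simp
    then show ?thesis
      using rank by simp
  next
    case False
    then show ?thesis
      using gen_rank_le_card_if_generate_Un_Cyc[OF fin fin_T T(1) False gen_T] card_T S(3) by simp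
  qed
qed

lemma gen_rank_subgroup_generated_one: "gen_rank (subgroup_generated G {\<one>}) = 0"
  using group.gen_rank_trivial[OF group_subgroup_generated, of "{\<one>}"] generate_one
  by (simp add: carrier_subgroup_generated)

lemma gen_rank_subgroup_generated_noncyclic_pair:
  assumes fin: "finite (carrier G)" and ab: "a \<in> carrier G" "b \<in> carrier G"
    and noncyclic: "\<not> cyclic_group (subgroup_generated G {a, b})"
  shows "gen_rank (subgroup_generated G {a, b}) = 2"
proof -
  let ?K = "subgroup_generated G {a, b}"
  interpret K: group ?K
    by simp
  have ab_K: "{a, b} \<subseteq> carrier ?K"
    using ab subgroup_generated_subset_carrier_subset[of "{a, b}"] by simp
  have "generate ?K {a, b} = carrier ?K"
    using subgroup_generated2[of "{a, b}"] carrier_subgroup_generated[of ?K "{a, b}"] ab_K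
    by (simp add: Int_absorb1)
  then have "gen_rank ?K \<le> card {a, b}"
    using gen_rank_le_card[of "{a, b}" ?K] ab_K by simp
  also have "\<dots> \<le> 2"
    by (simp add: card_insert_if)
  finally have "gen_rank ?K \<le> 2" .
  moreover have "finite (carrier ?K)"
    using fin carrier_subgroup_generated_subset finite_subset by blast
  then have "\<not> gen_rank ?K \<le> 1"
    using K.cyclic_group_if_gen_rank_le_1 noncyclic by blast
  ultimately show ?thesis
    by simp
qed

lemma flexible_2_extend_noncyclic_pair:
  assumes flex: "flexible G 2" and fin: "finite (carrier G)" and ab: "a \<in> carrier G" "b \<in> carrier G"
    and noncyclic: "\<not> cyclic_group (subgroup_generated G {a, b})"
  obtains y where "y 0 = a" "y 1 = b" "\<forall>i < gen_rank G. y i \<in> carrier G"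
    "generate G (y ` {..<gen_rank G}) = carrier G"
proof -
  define x where "x = (\<lambda>i::nat. if i = 0 then a else b)"
  have "{..<2::nat} = {0, 1}"
    by auto
  then have x2: "x ` {..<2} = {a, b}" "\<forall>i<2. x i \<in> carrier G"
    unfolding x_def using ab by auto
  then have "gen_rank (subgroup_generated G (x ` {..<2})) = 2"
    using gen_rank_subgroup_generated_noncyclic_pair[OF fin ab noncyclic] by simp
  then obtain y where y: "\<forall>i<2. y i = x i" "\<forall>i < gen_rank G. y i \<in> carrier G"
    "generate G (y ` {..<gen_rank G}) = carrier G"
    using flex x2(2) unfolding flexible_def by blast
  moreover have "y 0 = a" "y 1 = b"
    using y(1)[rule_format, of 0] y(1)[rule_format, of 1] unfolding x_def by simp_all
  ultimately show ?thesis
    using that by blast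
qed

lemma flexible_2_extend_Mod_Cyc:
  assumes flex: "flexible G 2" and fin: "finite (carrier G)"
    and X: "X \<in> carrier (G Mod Cyc G)" "X \<noteq> \<one>\<^bsub>G Mod Cyc G\<^esub>"
  obtains y where "y 0 = X" "\<forall>i < gen_rank G. y i \<in> carrier (G Mod Cyc G)"
    "generate (G Mod Cyc G) (y ` {..<gen_rank G}) = carrier (G Mod Cyc G)"
proof -
  let ?r = "\<lambda>a. Cyc G #> a"
  have carrier_Q: "carrier (G Mod Cyc G) = ?r ` carrier G"
    by (rule carrier_FactGroup)
  obtain x where x: "x \<in> carrier G" "X = ?r x"
    using X(1) carrier_Q by blast
  have "x \<notin> Cyc G"
    using X(2) x(2) subgroup.rcos_const[OF Cyc_subgroup is_group] by auto
  then obtain g where g: "g \<in> carrier G" "\<not> cyclic_group (subgroup_generated G {x, g})"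
    using x(1) unfolding Cyc_def by blast
  then obtain y where y: "y 0 = x" "\<forall>i < gen_rank G. y i \<in> carrier G"
    "generate G (y ` {..<gen_rank G}) = carrier G"
    using flexible_2_extend_noncyclic_pair[OF flex fin x(1)] by metis
  have "generate (G Mod Cyc G) ((?r \<circ> y) ` {..<gen_rank G}) = carrier (G Mod Cyc G)"
    using group_hom.generate_img[OF normal.group_hom_Mod[OF Cyc_normal], of "y ` {..<gen_rank G}"]
      y(2,3) carrier_Q by (auto simp: image_comp)
  then show ?thesis
    using that[of "?r \<circ> y"] x(2) y(1,2) carrier_Q by auto
qed

end

theorem corollary2p6:
  fixes G :: "('a, 'b) monoid_scheme"
  assumes "group G" and "finite (carrier G)"
    and "gen_rank G \<ge> 2"
    and "flexible G 2"
  shows "flexible (G Mod Cyc G) 1"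
proof -
  interpret group G
    by fact
  let ?Q = "G Mod Cyc G"
  interpret Q: group ?Q
    by (rule normal.factorgroup_is_group[OF Cyc_normal])
  have rank: "gen_rank ?Q = gen_rank G"
    using gen_rank_Mod_Cyc assms(2,3) by blast
  have "\<exists>y. (\<forall>i<1. y i = x i) \<and> (\<forall>i < gen_rank ?Q. y i \<in> carrier ?Q) \<and>
      generate ?Q (y ` {..<gen_rank ?Q}) = carrier ?Q"
    if x: "\<forall>i<1. x i \<in> carrier ?Q" "gen_rank (subgroup_generated ?Q (x ` {..<1})) = 1" for x
  proof -
    have "x ` {..<1} = {x 0}"
      by auto
    then have "x 0 \<noteq> \<one>\<^bsub>?Q\<^esub>"
      using x(2) Q.gen_rank_subgroup_generated_one by auto
    then obtain y where "y 0 = x 0" "\<forall>i < gen_rank G. y i \<in> carrier ?Q"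
      "generate ?Q (y ` {..<gen_rank G}) = carrier ?Q"
      using flexible_2_extend_Mod_Cyc[OF assms(4,2)] x(1) by blast
    then show ?thesis
      using rank by auto
  qed
  then show ?thesis
    using rank assms(3) unfolding flexible_def by auto
qed

end
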